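(* Let $X$ be a shift space which is eventually dendric with threshold $m$. Then $\rho_X(U)$ is finite for every suffix code $U\subseteq\mathcal L(X)$. Moreover, if $U$ is a finite $X$-maximal suffix code with $U\subseteq\mathcal L_{\ge m}(X)$, then $\rho_X(U)=\rho_X(\mathcal L_m(X))$.
   Context: $A$ is a finite alphabet; a shift space is a closed shift-invariant subset $X\subseteq A^{\mathbb Z}$; $\mathcal L(X)$ is its set of finite factors (including the empty word), $\mathcal L_n(X)=\mathcal L(X)\cap A^n$, $\mathcal L_{\ge n}(X)=\bigcup_{k\ge n}\mathcal L_k(X)$. For $w\in\mathcal L(X)$, the extension graph $\mathcal E_1(w)$ is the undirected bipartite graph with vertex set the disjoint union of $\{a\in A: aw\in\mathcal L(X)\}$ and $R_1(w)=\{b\in A: wb\in\mathcal L(X)\}$, with an edge $(a,b)$ iff $awb\in\mathcal L(X)$; $X$ is eventually dendric with threshold $m$ if $\mathcal E_1(w)$ is a tree for every $w\in\mathcal L_{\ge m}(X)$. Set $\rho_X(w)=\mathrm{Card}\,R_1(w)-1$ and $\rho_X(W)=\sum_{w\in W}\rho_X(w)$ for $W\subseteq\mathcal L(X)$. A suffix code is a set of words none of which is a proper suffix of another; a suffix code $U\subseteq\mathcal L(X)$ is $X$-maximal if it is not properly contained in a suffix code $V\subseteq\mathcal L(X)$. *)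

theory Defs
  imports Main "HOL-Library.Sublist"
begin

definition shift_map :: "(int \<Rightarrow> 'a) \<Rightarrow> (int \<Rightarrow> 'a)" where
  "shift_map x = (\<lambda>i. x (i + 1))"

text \<open>Closedness in the product (Tychonoff) topology of A^Z with A discrete:
  every point all of whose central cylinders meet X lies in X.\<close>
definition closed_seqs :: "(int \<Rightarrow> 'a) set \<Rightarrow> bool" where
  "closed_seqs X \<longleftrightarrow>
     (\<forall>x. (\<forall>n::nat. \<exists>y\<in>X. \<forall>i. \<bar>i\<bar> \<le> int n \<longrightarrow> y i = x i) \<longrightarrow> x \<in> X)"

definition shift_space :: "'a set \<Rightarrow> (int \<Rightarrow> 'a) set \<Rightarrow> bool" where
  "shift_space A X \<longleftrightarrow> finite A \<and> X \<subseteq> {x. \<forall>i. x i \<in> A}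
     \<and> closed_seqs X \<and> shift_map ` X = X"

definition lang :: "(int \<Rightarrow> 'a) set \<Rightarrow> 'a list set" where
  "lang X = {w. \<exists>x\<in>X. \<exists>i::int. w = map (\<lambda>k. x (i + int k)) [0..<length w]}"

definition lang_n :: "(int \<Rightarrow> 'a) set \<Rightarrow> nat \<Rightarrow> 'a list set" where
  "lang_n X n = {w \<in> lang X. length w = n}"

definition lang_ge :: "(int \<Rightarrow> 'a) set \<Rightarrow> nat \<Rightarrow> 'a list set" where
  "lang_ge X n = {w \<in> lang X. n \<le> length w}"

definition left_ext :: "(int \<Rightarrow> 'a) set \<Rightarrow> 'a list \<Rightarrow> 'a set" where
  "left_ext X w = {a. a # w \<in> lang X}"

definition right_ext :: "(int \<Rightarrow> 'a) set \<Rightarrow> 'a list \<Rightarrow> 'a set" where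
  "right_ext X w = {b. w @ [b] \<in> lang X}"

definition ug_connected :: "'v set \<Rightarrow> ('v \<Rightarrow> 'v \<Rightarrow> bool) \<Rightarrow> bool" where
  "ug_connected V E \<longleftrightarrow> V \<noteq> {} \<and>
     (\<forall>u\<in>V. \<forall>v\<in>V. (u, v) \<in> {(p, q). p \<in> V \<and> q \<in> V \<and> E p q}\<^sup>*)"

definition ug_has_cycle :: "'v set \<Rightarrow> ('v \<Rightarrow> 'v \<Rightarrow> bool) \<Rightarrow> bool" where
  "ug_has_cycle V E \<longleftrightarrow> (\<exists>vs. 3 \<le> length vs \<and> distinct vs \<and> set vs \<subseteq> V
     \<and> (\<forall>i. Suc i < length vs \<longrightarrow> E (vs ! i) (vs ! Suc i))
     \<and> E (last vs) (hd vs))"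

definition ug_tree :: "'v set \<Rightarrow> ('v \<Rightarrow> 'v \<Rightarrow> bool) \<Rightarrow> bool" where
  "ug_tree V E \<longleftrightarrow> ug_connected V E \<and> \<not> ug_has_cycle V E"

text \<open>Extension graph E_1(w): left vertices Inl a, right vertices Inr b,
  undirected edge between Inl a and Inr b iff a w b is in the language.\<close>
definition ext_vertices :: "(int \<Rightarrow> 'a) set \<Rightarrow> 'a list \<Rightarrow> ('a + 'a) set" where
  "ext_vertices X w = Inl ` left_ext X w \<union> Inr ` right_ext X w"

definition ext_adj :: "(int \<Rightarrow> 'a) set \<Rightarrow> 'a list \<Rightarrow> ('a + 'a) \<Rightarrow> ('a + 'a) \<Rightarrow> bool" where
  "ext_adj X w u v \<longleftrightarrow>
     (\<exists>a b. ((u = Inl a \<and> v = Inr b) \<or> (u = Inr b \<and> v = Inl a)) \<and> a # w @ [b] \<in> lang X)"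

definition eventually_dendric :: "(int \<Rightarrow> 'a) set \<Rightarrow> nat \<Rightarrow> bool" where
  "eventually_dendric X m \<longleftrightarrow>
     (\<forall>w \<in> lang_ge X m. ug_tree (ext_vertices X w) (ext_adj X w))"

definition rho :: "(int \<Rightarrow> 'a) set \<Rightarrow> 'a list \<Rightarrow> int" where
  "rho X w = int (card (right_ext X w)) - 1"

definition suffix_code :: "'a list set \<Rightarrow> bool" where
  "suffix_code U \<longleftrightarrow> (\<forall>u\<in>U. \<forall>v\<in>U. \<not> strict_suffix u v)"

definition X_maximal_suffix_code :: "(int \<Rightarrow> 'a) set \<Rightarrow> 'a list set \<Rightarrow> bool" where
  "X_maximal_suffix_code X U \<longleftrightarrow> suffix_code U \<and> U \<subseteq> lang X \<and>
     \<not> (\<exists>V. suffix_code V \<and> V \<subseteq> lang X \<and> U \<subset> V)"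

end

theory Submission
  imports Defs
begin

text \<open>
  Counting the edges of the tree \<open>\<E>\<^sub>1(w)\<close> in two ways gives, for every \<open>w\<close> of length
  at least \<open>m\<close>, \<open>\<rho>(w) = \<Sum>\<^sub>a \<rho>(aw)\<close> over the left extensions \<open>a\<close> of \<open>w\<close>.
  Iterating, \<open>\<rho>(u)\<close> is the sum of \<open>\<rho>\<close> over the words of any fixed length \<open>N \<ge> |u|\<close> having
  \<open>u\<close> as a suffix. For a finite suffix code \<open>U\<close> of words of length at least \<open>m\<close> these sets
  of words are disjoint, so \<open>\<rho>(U)\<close> is at most \<open>\<rho>(\<L>\<^sub>N(X)) = \<rho>(\<L>\<^sub>m(X))\<close>, with
  equality when \<open>U\<close> is \<open>X\<close>-maximal because then every word of \<open>\<L>\<^sub>N(X)\<close> has a suffix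
  in \<open>U\<close>. As \<open>\<rho> \<ge> 0\<close> on \<open>\<L>(X)\<close>, the bound also forces \<open>\<rho> \<noteq> 0\<close> on only finitely many
  elements of an arbitrary suffix code.
\<close>

definition ug_arcs :: "'v set \<Rightarrow> ('v \<Rightarrow> 'v \<Rightarrow> bool) \<Rightarrow> ('v \<times> 'v) set" where
  "ug_arcs V E = {(u, v). u \<in> V \<and> v \<in> V \<and> E u v}"

lemma ug_connected_iff_arcs:
  "ug_connected V E \<longleftrightarrow> V \<noteq> {} \<and> (\<forall>u\<in>V. \<forall>v\<in>V. (u, v) \<in> (ug_arcs V E)\<^sup>*)"
  unfolding ug_connected_def ug_arcs_def ..

lemma finite_ug_arcs: "finite V \<Longrightarrow> finite (ug_arcs V E)"
  unfolding ug_arcs_def by (rule finite_subset[of _ "V \<times> V"]) auto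

lemma ug_has_cycle_of_path_chord:
  assumes "distinct vs" "set vs \<subseteq> V" "\<And>i. Suc i < length vs \<Longrightarrow> E (vs ! i) (vs ! Suc i)"
    and "2 \<le> j" "j < length vs" "E (vs ! j) (vs ! 0)"
  shows "ug_has_cycle V E"
  unfolding ug_has_cycle_def
proof (intro exI[of _ "take (Suc j) vs"] conjI allI impI)
  show "set (take (Suc j) vs) \<subseteq> V"
    using assms(2) by (meson order_trans set_take_subset)
  have "last (take (Suc j) vs) = vs ! j" "hd (take (Suc j) vs) = vs ! 0"
    using assms(4,5) by (auto simp: take_Suc_conv_app_nth hd_conv_nth nth_append)
  then show "E (last (take (Suc j) vs)) (hd (take (Suc j) vs))"
    using assms(6) by simp
qed (use assms in auto)

text \<open>A longest path cannot be extended at its first vertex, and a chord from that vertex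
  would close a cycle; so the first vertex is a leaf.\<close>
lemma acyclic_ug_has_leaf:
  assumes "finite V" and sym: "\<And>u v. E u v \<Longrightarrow> E v u" and irrefl: "\<And>u. \<not> E u u"
    and acyclic: "\<not> ug_has_cycle V E" and edge: "a \<in> V" "b \<in> V" "E a b"
  shows "\<exists>l\<in>V. \<exists>p\<in>V. E l p \<and> (\<forall>q\<in>V. E l q \<longrightarrow> q = p)"
proof -
  define path where "path vs \<longleftrightarrow> distinct vs \<and> set vs \<subseteq> V
      \<and> (\<forall>i. Suc i < length vs \<longrightarrow> E (vs ! i) (vs ! Suc i))" for vs
  have path_ab: "path [a, b]"
    using edge irrefl unfolding path_def by (auto simp: nth_Cons split: nat.splits)
  have bounded: "\<forall>n. (\<exists>vs. path vs \<and> length vs = n) \<longrightarrow> n \<le> card V"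
    using assms(1) unfolding path_def by (metis card_mono distinct_card)
  obtain n where "\<exists>vs. path vs \<and> length vs = n"
    "\<forall>k. (\<exists>vs. path vs \<and> length vs = k) \<longrightarrow> k \<le> n"
    using Nat.ex_has_greatest_nat[where P = "\<lambda>n. \<exists>vs. path vs \<and> length vs = n", OF _ bounded]
      path_ab by blast
  then obtain vs where vs: "path vs" and longest: "\<And>ws. path ws \<Longrightarrow> length ws \<le> length vs"
    by blast
  have len: "2 \<le> length vs" using longest[OF path_ab] by simp
  have vs_V: "set vs \<subseteq> V" and vs_adj: "\<And>i. Suc i < length vs \<Longrightarrow> E (vs ! i) (vs ! Suc i)"
    using vs unfolding path_def by auto
  have "\<forall>q\<in>V. E (vs ! 0) q \<longrightarrow> q = vs ! 1"
  proof (intro ballI impI, rule ccontr)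
    fix q assume q: "q \<in> V" "E (vs ! 0) q" "q \<noteq> vs ! 1"
    show False
    proof (cases "q \<in> set vs")
      case False
      then have "path (q # vs)"
        using vs q sym[OF q(2)] unfolding path_def by (auto simp: nth_Cons split: nat.splits)
      then show False using longest by fastforce
    next
      case True
      then obtain j where j: "j < length vs" "vs ! j = q" by (auto simp: in_set_conv_nth)
      have "j \<noteq> 0" using j(2) q(2) irrefl[of q] by (cases j) auto
      moreover have "j \<noteq> 1" using j(2) q(3) by auto
      ultimately have "2 \<le> j" by simp
      then show False
        using ug_has_cycle_of_path_chord[of vs V E j] vs j q sym acyclic
        unfolding path_def by blast
    qed
  qed
  moreover have "vs ! 0 \<in> set vs" "vs ! 1 \<in> set vs" using len by (auto intro!: nth_mem)
  then have "vs ! 0 \<in> V" "vs ! 1 \<in> V" using vs_V by auto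
  moreover have "E (vs ! 0) (vs ! 1)" using len vs_adj[of 0] by simp
  ultimately show ?thesis by blast
qed

lemma ug_arcs_remove_leaf:
  assumes "\<And>u v. E u v \<Longrightarrow> E v u" and "l \<in> V" "p \<in> V" "E l p"
    and leaf: "\<forall>q\<in>V. E l q \<longrightarrow> q = p"
  shows "ug_arcs V E = ug_arcs (V - {l}) E \<union> {(l, p), (p, l)}"
  using assms unfolding ug_arcs_def by blast

lemma ug_has_cycle_mono: "ug_has_cycle V E \<Longrightarrow> V \<subseteq> W \<Longrightarrow> ug_has_cycle W E"
  unfolding ug_has_cycle_def by blast

lemma ug_tree_remove_leaf:
  assumes sym: "\<And>u v. E u v \<Longrightarrow> E v u" and tree: "ug_tree V E"
    and l: "l \<in> V" "p \<in> V" "l \<noteq> p" and leaf: "\<forall>q\<in>V. E l q \<longrightarrow> q = p"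
  shows "ug_tree (V - {l}) E"
proof -
  let ?R = "ug_arcs V E" and ?R' = "ug_arcs (V - {l}) E"
  \<comment> \<open>a walk starting outside \<open>l\<close> can only enter \<open>l\<close> from \<open>p\<close>\<close>
  have walk: "(y \<noteq> l \<longrightarrow> (x, y) \<in> ?R'\<^sup>*) \<and> (y = l \<longrightarrow> (x, p) \<in> ?R'\<^sup>*)"
    if "(x, y) \<in> ?R\<^sup>*" "x \<noteq> l" for x y
    using that
  proof (induction rule: rtrancl_induct)
    case (step y z)
    then have yz: "y \<in> V" "z \<in> V" "E y z" by (auto simp: ug_arcs_def)
    consider "y = l" | "y \<noteq> l" "z = l" | "y \<noteq> l" "z \<noteq> l" by blast
    then show ?case
    proof cases
      case 1
      then have "z = p" using yz leaf by blast
      then show ?thesis using step.IH step.prems 1 l(3) by simp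
    next
      case 2
      then have "y = p" using yz(1) leaf sym[OF yz(3)] by blast
      then show ?thesis using step.IH step.prems 2 by simp
    next
      case 3
      then have "(y, z) \<in> ?R'" using yz by (auto simp: ug_arcs_def)
      then show ?thesis using step.IH step.prems 3 by (simp add: rtrancl_into_rtrancl)
    qed
  qed simp
  have "ug_connected (V - {l}) E"
    unfolding ug_connected_iff_arcs
  proof (intro conjI ballI)
    show "V - {l} \<noteq> {}" using l by blast
    fix x y assume "x \<in> V - {l}" "y \<in> V - {l}"
    moreover have "(x, y) \<in> ?R\<^sup>*"
      using calculation tree unfolding ug_tree_def ug_connected_iff_arcs by blast
    ultimately show "(x, y) \<in> ?R'\<^sup>*" using walk[of x y] by blast
  qed
  moreover have "\<not> ug_has_cycle (V - {l}) E"
    using tree ug_has_cycle_mono[of "V - {l}" E V] unfolding ug_tree_def by blast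
  ultimately show ?thesis unfolding ug_tree_def ..
qed

lemma card_ug_arcs_tree:
  assumes "card V = Suc n" and "finite V" and sym: "\<And>u v. E u v \<Longrightarrow> E v u"
    and irrefl: "\<And>u. \<not> E u u" and "ug_tree V E"
  shows "card (ug_arcs V E) = 2 * n"
  using assms(1,2,5)
proof (induction n arbitrary: V)
  case 0
  then obtain x where "V = {x}" by (auto simp: card_Suc_eq)
  then have "ug_arcs V E = {}" using irrefl by (auto simp: ug_arcs_def)
  then show ?case by simp
next
  case (Suc n)
  obtain a b where ab: "a \<in> V" "b \<in> V" "a \<noteq> b"
    using Suc.prems(1) by (auto simp: card_Suc_eq)
  then have "(a, b) \<in> (ug_arcs V E)\<^sup>*"
    using Suc.prems(3) unfolding ug_tree_def ug_connected_iff_arcs by blast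
  then obtain c where "(a, c) \<in> ug_arcs V E" using ab(3) by (metis converse_rtranclE)
  then have "\<exists>l\<in>V. \<exists>p\<in>V. E l p \<and> (\<forall>q\<in>V. E l q \<longrightarrow> q = p)"
    using acyclic_ug_has_leaf[where E = E, OF Suc.prems(2) sym irrefl] Suc.prems(3)
    unfolding ug_tree_def ug_arcs_def by blast
  then obtain l p where l: "l \<in> V" "p \<in> V" "E l p" and leaf: "\<forall>q\<in>V. E l q \<longrightarrow> q = p"
    by blast
  have "l \<noteq> p" using l irrefl by auto
  have "ug_tree (V - {l}) E"
    using ug_tree_remove_leaf[where E = E, OF sym Suc.prems(3) l(1,2) \<open>l \<noteq> p\<close> leaf] .
  then have "card (ug_arcs (V - {l}) E) = 2 * n"
    using Suc.IH[of "V - {l}"] Suc.prems l by simp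
  moreover have "ug_arcs (V - {l}) E \<inter> {(l, p), (p, l)} = {}" by (auto simp: ug_arcs_def)
  moreover have "card {(l, p), (p, l)} = 2" using \<open>l \<noteq> p\<close> by simp
  ultimately have "card (ug_arcs (V - {l}) E \<union> {(l, p), (p, l)}) = 2 * Suc n"
    using card_Un_disjoint[of "ug_arcs (V - {l}) E" "{(l, p), (p, l)}"]
      finite_ug_arcs[of "V - {l}" E] Suc.prems(2)
    by simp
  then show ?case
    by (subst ug_arcs_remove_leaf[where E = E, OF sym l leaf])
qed

lemma lang_iff_nth:
  "w \<in> lang X \<longleftrightarrow> (\<exists>x\<in>X. \<exists>i. \<forall>k<length w. w ! k = x (i + int k))"
proof -
  have "w = map f [0..<length w] \<longleftrightarrow> (\<forall>k<length w. w ! k = f k)" for f :: "nat \<Rightarrow> 'a"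
  proof
    show "w = map f [0..<length w] \<Longrightarrow> \<forall>k<length w. w ! k = f k"
      by (metis add_0 diff_zero length_map length_upt nth_map_upt)
  qed (auto intro: nth_equalityI)
  then show ?thesis unfolding lang_def by simp
qed

lemma lang_ConsD: "a # w \<in> lang X \<Longrightarrow> w \<in> lang X"
proof -
  assume "a # w \<in> lang X"
  then obtain x i where "x \<in> X" and x: "\<forall>k<Suc (length w). (a # w) ! k = x (i + int k)"
    unfolding lang_iff_nth by auto
  have "w ! k = x (i + 1 + int k)" if "k < length w" for k
    using x[rule_format, of "Suc k"] that by (simp add: add.assoc)
  with \<open>x \<in> X\<close> show ?thesis unfolding lang_iff_nth by blast
qed

lemma lang_suffix: "suffix u w \<Longrightarrow> w \<in> lang X \<Longrightarrow> u \<in> lang X"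
proof -
  have "zs @ u \<in> lang X \<Longrightarrow> u \<in> lang X" for zs
    by (induction zs) (auto dest: lang_ConsD)
  then show "suffix u w \<Longrightarrow> w \<in> lang X \<Longrightarrow> u \<in> lang X" unfolding suffix_def by blast
qed

lemma right_ext_nonempty: "w \<in> lang X \<Longrightarrow> right_ext X w \<noteq> {}"
proof -
  assume "w \<in> lang X"
  then obtain x i where "x \<in> X" and x: "\<forall>k<length w. w ! k = x (i + int k)"
    unfolding lang_iff_nth by blast
  then have "\<forall>k<length (w @ [x (i + int (length w))]). (w @ [x (i + int (length w))]) ! k = x (i + int k)"
    by (auto simp: nth_append less_Suc_eq)
  with \<open>x \<in> X\<close> have "w @ [x (i + int (length w))] \<in> lang X" unfolding lang_iff_nth by blast
  then show ?thesis unfolding right_ext_def by blast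
qed

lemma set_lang_subset:
  assumes "X \<subseteq> {x. \<forall>i. x i \<in> A}" and "w \<in> lang X"
  shows "set w \<subseteq> A"
proof
  fix a assume "a \<in> set w"
  then obtain k where "k < length w" "a = w ! k" by (auto simp: in_set_conv_nth)
  with assms show "a \<in> A" unfolding lang_iff_nth by auto
qed

lemma ext_adj_sym: "ext_adj X w u v \<Longrightarrow> ext_adj X w v u"
  unfolding ext_adj_def by blast

lemma ext_adj_irrefl: "\<not> ext_adj X w u u"
  unfolding ext_adj_def by blast

lemma ug_arcs_ext_graph:
  "ug_arcs (ext_vertices X w) (ext_adj X w)
     = (\<lambda>(a, b). (Inl a, Inr b)) ` (SIGMA a:left_ext X w. right_ext X (a # w))
     \<union> (\<lambda>(a, b). (Inr b, Inl a)) ` (SIGMA a:left_ext X w. right_ext X (a # w))"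
proof -
  have "a # w @ [b] \<in> lang X \<Longrightarrow> b \<in> right_ext X w" for a b
    unfolding right_ext_def by (auto dest: lang_ConsD)
  then show ?thesis
    unfolding ug_arcs_def ext_vertices_def ext_adj_def left_ext_def right_ext_def by auto
qed

context
  fixes A :: "'a set" and X :: "(int \<Rightarrow> 'a) set"
  assumes shift: "shift_space A X"
begin

lemma finite_alphabet: "finite A" and seqs_in_alphabet: "X \<subseteq> {x. \<forall>i. x i \<in> A}"
  using shift unfolding shift_space_def by blast+

lemma finite_lang_n: "finite (lang_n X n)"
proof (rule finite_subset)
  show "lang_n X n \<subseteq> {w. set w \<subseteq> A \<and> length w = n}"
    using set_lang_subset[OF seqs_in_alphabet] unfolding lang_n_def by blast
  show "finite {w. set w \<subseteq> A \<and> length w = n}"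
    by (rule finite_lists_length_eq[OF finite_alphabet])
qed

lemma finite_right_ext: "finite (right_ext X w)"
proof (rule finite_subset[OF _ finite_alphabet])
  show "right_ext X w \<subseteq> A"
    using set_lang_subset[OF seqs_in_alphabet, of "w @ [_]"] unfolding right_ext_def by auto
qed

lemma finite_left_ext: "finite (left_ext X w)"
proof (rule finite_subset[OF _ finite_alphabet])
  show "left_ext X w \<subseteq> A"
    using set_lang_subset[OF seqs_in_alphabet, of "_ # w"] unfolding left_ext_def by auto
qed

lemma rho_nonneg: "w \<in> lang X \<Longrightarrow> 0 \<le> rho X w"
  using right_ext_nonempty finite_right_ext unfolding rho_def by (simp add: card_gt_0_iff)

text \<open>The tree \<open>\<E>\<^sub>1(w)\<close> has \<open>card L + card R - 1\<close> edges, and counted from the left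
  vertices it has \<open>\<Sum>\<^sub>a card (R\<^sub>1(aw))\<close> of them.\<close>
lemma rho_eq_sum_left_ext:
  assumes tree: "ug_tree (ext_vertices X w) (ext_adj X w)"
  shows "rho X w = (\<Sum>a\<in>left_ext X w. rho X (a # w))"
proof -
  let ?V = "ext_vertices X w" and ?L = "left_ext X w" and ?R = "right_ext X w"
  let ?Ed = "SIGMA a:?L. right_ext X (a # w)"
  have finite_Ed: "finite ?Ed" using finite_left_ext finite_right_ext by blast
  have finite_V: "finite ?V"
    unfolding ext_vertices_def using finite_left_ext finite_right_ext by blast
  have card_V: "card ?V = card ?L + card ?R"
    unfolding ext_vertices_def using finite_left_ext finite_right_ext
    by (subst card_Un_disjoint) (auto simp: card_image)
  have "?V \<noteq> {}" using tree unfolding ug_tree_def ug_connected_def by blast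
  then obtain n where n: "card ?V = Suc n"
    using finite_V by (metis card_0_eq not0_implies_Suc)
  have "card (ug_arcs ?V (ext_adj X w)) = card ?Ed + card ?Ed"
    unfolding ug_arcs_ext_graph using finite_Ed
    by (subst card_Un_disjoint) (auto simp: card_image inj_on_def)
  moreover have "card (ug_arcs ?V (ext_adj X w)) = 2 * n"
    using card_ug_arcs_tree[where E = "ext_adj X w", OF n finite_V ext_adj_sym ext_adj_irrefl tree] .
  ultimately have "card ?Ed = n" by simp
  moreover have "card ?Ed = (\<Sum>a\<in>?L. card (right_ext X (a # w)))"
    using finite_left_ext finite_right_ext by simp
  ultimately have "(\<Sum>a\<in>?L. int (card (right_ext X (a # w)))) = int (card ?L) + int (card ?R) - 1"
    using n card_V by (simp flip: of_nat_sum)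
  then show ?thesis unfolding rho_def by (simp add: sum_subtractf)
qed

end

lemma suffix_code_suffix_unique:
  assumes "suffix_code V" "u \<in> V" "v \<in> V" "suffix u w" "suffix v w"
  shows "u = v"
proof -
  have "suffix u v \<or> suffix v u" using assms(4,5) by (rule suffix_same_cases)
  then show ?thesis using assms(1-3) unfolding suffix_code_def strict_suffix_def by blast
qed

lemma suffix_code_lang_n: "suffix_code (lang_n X n)"
  unfolding suffix_code_def lang_n_def using suffix_length_less by fastforce

lemma lang_n_Suc_suffix_eq_image:
  assumes "length u \<le> n"
  shows "{w \<in> lang_n X (Suc n). suffix u w}
    = (\<lambda>(w, a). a # w) ` (SIGMA w:{w \<in> lang_n X n. suffix u w}. left_ext X w)"
proof (intro equalityI subsetI)
  fix z assume "z \<in> {w \<in> lang_n X (Suc n). suffix u w}"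
  then have z: "z \<in> lang X" "length z = Suc n" "suffix u z" unfolding lang_n_def by auto
  then obtain a w where zw: "z = a # w" by (cases z) auto
  have "w \<in> lang_n X n" using z(1,2) zw lang_ConsD unfolding lang_n_def by auto
  moreover have "suffix u w" using z(2,3) zw assms by (auto simp: suffix_Cons)
  moreover have "a \<in> left_ext X w" using z(1) zw unfolding left_ext_def by simp
  ultimately show "z \<in> (\<lambda>(w, a). a # w) ` (SIGMA w:{w \<in> lang_n X n. suffix u w}. left_ext X w)"
    using zw by (intro image_eqI[of _ _ "(w, a)"]) auto
next
  fix z assume "z \<in> (\<lambda>(w, a). a # w) ` (SIGMA w:{w \<in> lang_n X n. suffix u w}. left_ext X w)"
  then obtain w a where "w \<in> lang_n X n" "suffix u w" "a \<in> left_ext X w" "z = a # w" by auto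
  then show "z \<in> {w \<in> lang_n X (Suc n). suffix u w}"
    unfolding lang_n_def left_ext_def by (simp add: suffix_ConsI)
qed

lemma maximal_suffix_code_has_suffix:
  assumes max: "X_maximal_suffix_code X U" and w: "w \<in> lang X"
    and short: "\<forall>v\<in>U. length v \<le> length w"
  shows "\<exists>v\<in>U. suffix v w"
proof (rule ccontr)
  assume no_suffix: "\<not> (\<exists>v\<in>U. suffix v w)"
  have code: "suffix_code U" and "U \<subseteq> lang X"
    using max unfolding X_maximal_suffix_code_def by auto
  have "suffix_code (insert w U)"
    unfolding suffix_code_def
  proof (intro ballI notI)
    fix u v assume "u \<in> insert w U" "v \<in> insert w U" and uv: "strict_suffix u v"
    then consider "u = w" "v \<in> U" | "u \<in> U" "v = w" | "u \<in> U" "v \<in> U"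
      using suffix_length_less by blast
    then show False
    proof cases
      case 1 then show False using short suffix_length_less[OF uv] by fastforce
    next
      case 2 then show False using no_suffix uv unfolding strict_suffix_def by blast
    next
      case 3 then show False using code uv unfolding suffix_code_def by blast
    qed
  qed
  moreover have "insert w U \<subseteq> lang X" using \<open>U \<subseteq> lang X\<close> w by blast
  moreover have "U \<subset> insert w U" using no_suffix by blast
  ultimately show False using max unfolding X_maximal_suffix_code_def by blast
qed

context
  fixes A :: "'a set" and X :: "(int \<Rightarrow> 'a) set" and m :: nat
  assumes shift: "shift_space A X" and dendric: "eventually_dendric X m"
begin

lemma rho_eq_sum_extensions:
  assumes u: "u \<in> lang X" "m \<le> length u" and "length u \<le> n"
  shows "rho X u = (\<Sum>w\<in>{w \<in> lang_n X n. suffix u w}. rho X w)"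
  using assms(3)
proof (induction n rule: dec_induct)
  case base
  have "{w \<in> lang_n X (length u). suffix u w} = {u}"
    using u unfolding lang_n_def suffix_def by auto
  then show ?case by simp
next
  case (step n)
  let ?S = "{w \<in> lang_n X n. suffix u w}"
  have "finite ?S" by (rule finite_subset[OF _ finite_lang_n[OF shift]]) auto
  have "(\<Sum>w\<in>{w \<in> lang_n X (Suc n). suffix u w}. rho X w)
      = (\<Sum>(w, a)\<in>(SIGMA w:?S. left_ext X w). rho X (a # w))"
    unfolding lang_n_Suc_suffix_eq_image[OF step.hyps(1)]
    by (subst sum.reindex) (auto simp: inj_on_def case_prod_unfold)
  also have "\<dots> = (\<Sum>w\<in>?S. \<Sum>a\<in>left_ext X w. rho X (a # w))"
    using \<open>finite ?S\<close> finite_left_ext[OF shift] by (subst sum.Sigma) auto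
  also have "\<dots> = (\<Sum>w\<in>?S. rho X w)"
  proof (rule sum.cong)
    fix w assume "w \<in> ?S"
    then have "ug_tree (ext_vertices X w) (ext_adj X w)"
      using dendric u(2) step.hyps unfolding eventually_dendric_def lang_ge_def lang_n_def by auto
    then show "(\<Sum>a\<in>left_ext X w. rho X (a # w)) = rho X w"
      using rho_eq_sum_left_ext[OF shift] by simp
  qed simp
  finally show ?case using step.IH by simp
qed

lemma sum_rho_suffix_code:
  assumes "finite V" and code: "suffix_code V" and "V \<subseteq> lang_ge X m"
    and "\<forall>v\<in>V. length v \<le> N"
  shows "(\<Sum>v\<in>V. rho X v) = (\<Sum>w\<in>{w \<in> lang_n X N. \<exists>v\<in>V. suffix v w}. rho X w)"
proof -
  have "{w \<in> lang_n X N. \<exists>v\<in>V. suffix v w} = (\<Union>v\<in>V. {w \<in> lang_n X N. suffix v w})"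
    by auto
  moreover have "(\<Sum>w\<in>(\<Union>v\<in>V. {w \<in> lang_n X N. suffix v w}). rho X w)
      = (\<Sum>v\<in>V. \<Sum>w\<in>{w \<in> lang_n X N. suffix v w}. rho X w)"
    using suffix_code_suffix_unique[OF code] \<open>finite V\<close> finite_lang_n[OF shift]
    by (subst sum.UNION_disjoint) auto
  moreover have "(\<Sum>w\<in>{w \<in> lang_n X N. suffix v w}. rho X w) = rho X v" if "v \<in> V" for v
    using rho_eq_sum_extensions[of v N] that assms(3,4) unfolding lang_ge_def by auto
  ultimately show ?thesis by simp
qed

lemma sum_rho_lang_n_eq:
  assumes "m \<le> N"
  shows "(\<Sum>w\<in>lang_n X N. rho X w) = (\<Sum>w\<in>lang_n X m. rho X w)"
proof -
  have "(\<Sum>w\<in>lang_n X m. rho X w)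
      = (\<Sum>w\<in>{w \<in> lang_n X N. \<exists>v\<in>lang_n X m. suffix v w}. rho X w)"
    using assms by (intro sum_rho_suffix_code finite_lang_n[OF shift] suffix_code_lang_n)
      (auto simp: lang_n_def lang_ge_def)
  also have "{w \<in> lang_n X N. \<exists>v\<in>lang_n X m. suffix v w} = lang_n X N"
  proof (intro equalityI subsetI)
    fix w assume "w \<in> lang_n X N"
    moreover have "drop (N - m) w \<in> lang_n X m"
      using calculation assms lang_suffix[OF suffix_drop] unfolding lang_n_def by auto
    ultimately show "w \<in> {w \<in> lang_n X N. \<exists>v\<in>lang_n X m. suffix v w}"
      using suffix_drop by blast
  qed simp
  finally show ?thesis by simp
qed

lemma sum_rho_suffix_code_le:
  assumes "finite V" "suffix_code V" "V \<subseteq> lang_ge X m"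
  shows "(\<Sum>v\<in>V. rho X v) \<le> (\<Sum>w\<in>lang_n X m. rho X w)"
proof -
  define N where "N = Max (insert m (length ` V))"
  have N: "\<forall>v\<in>V. length v \<le> N" "m \<le> N" unfolding N_def using assms(1) by auto
  have "(\<Sum>v\<in>V. rho X v) = (\<Sum>w\<in>{w \<in> lang_n X N. \<exists>v\<in>V. suffix v w}. rho X w)"
    using sum_rho_suffix_code[OF assms N(1)] .
  also have "\<dots> \<le> (\<Sum>w\<in>lang_n X N. rho X w)"
    using finite_lang_n[OF shift] rho_nonneg[OF shift]
    by (intro sum_mono2) (auto simp: lang_n_def)
  also have "\<dots> = (\<Sum>w\<in>lang_n X m. rho X w)" using sum_rho_lang_n_eq[OF N(2)] .
  finally show ?thesis .
qed

text \<open>Only finitely many words are shorter than \<open>m\<close>, and among the longer ones every element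
  with \<open>\<rho> \<noteq> 0\<close> contributes at least \<open>1\<close> to a sum bounded by \<open>\<rho>(\<L>\<^sub>m(X))\<close>.\<close>
lemma finite_rho_nonzero_suffix_code:
  assumes code: "suffix_code U" and "U \<subseteq> lang X"
  shows "finite {u \<in> U. rho X u \<noteq> 0}"
proof -
  define F where "F = {u \<in> U. m \<le> length u \<and> rho X u \<noteq> 0}"
  have "finite F"
  proof (rule ccontr)
    assume "infinite F"
    then obtain G where G: "finite G" "card G = Suc (nat (\<Sum>w\<in>lang_n X m. rho X w))" "G \<subseteq> F"
      using infinite_arbitrarily_large by blast
    have "suffix_code G" using code G(3) unfolding suffix_code_def F_def by blast
    moreover have "G \<subseteq> lang_ge X m" using G(3) assms(2) unfolding F_def lang_ge_def by auto
    ultimately have "(\<Sum>v\<in>G. rho X v) \<le> (\<Sum>w\<in>lang_n X m. rho X w)"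
      using sum_rho_suffix_code_le G(1) by blast
    moreover have "1 \<le> rho X v" if "v \<in> G" for v
    proof -
      have "rho X v \<noteq> 0" "v \<in> lang X" using that G(3) assms(2) unfolding F_def by auto
      then show ?thesis using rho_nonneg[OF shift, of v] by simp
    qed
    then have "(\<Sum>v\<in>G. 1) \<le> (\<Sum>v\<in>G. rho X v)" by (rule sum_mono)
    ultimately show False using G(2) by (simp split: if_split_asm)
  qed
  moreover have "{u \<in> U. rho X u \<noteq> 0} \<subseteq> {w. set w \<subseteq> A \<and> length w \<le> m} \<union> F"
  proof
    fix u assume "u \<in> {u \<in> U. rho X u \<noteq> 0}"
    moreover have "set u \<subseteq> A"
      using calculation assms(2) set_lang_subset[OF seqs_in_alphabet[OF shift]] by blast
    ultimately show "u \<in> {w. set w \<subseteq> A \<and> length w \<le> m} \<union> F"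
      unfolding F_def by auto
  qed
  moreover have "finite {w. set w \<subseteq> A \<and> length w \<le> m}"
    by (rule finite_lists_length_le[OF finite_alphabet[OF shift]])
  ultimately show ?thesis using finite_subset by blast
qed

lemma sum_rho_maximal_suffix_code:
  assumes "finite U" and max: "X_maximal_suffix_code X U" and "U \<subseteq> lang_ge X m"
  shows "(\<Sum>u\<in>U. rho X u) = (\<Sum>w\<in>lang_n X m. rho X w)"
proof -
  define N where "N = Max (insert m (length ` U))"
  have N: "\<forall>v\<in>U. length v \<le> N" "m \<le> N" unfolding N_def using assms(1) by auto
  have "{w \<in> lang_n X N. \<exists>v\<in>U. suffix v w} = lang_n X N"
    using maximal_suffix_code_has_suffix[OF max] N(1) unfolding lang_n_def by auto
  moreover have "suffix_code U" using max unfolding X_maximal_suffix_code_def by blast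
  ultimately show ?thesis
    using sum_rho_suffix_code[OF assms(1) _ assms(3) N(1)] sum_rho_lang_n_eq[OF N(2)] by simp
qed

end

theorem mainTheorem11:
  fixes A :: "'a set" and X :: "(int \<Rightarrow> 'a) set" and m :: nat
  assumes "shift_space A X"
    and "eventually_dendric X m"
  shows "(\<forall>U. suffix_code U \<and> U \<subseteq> lang X \<longrightarrow> finite {u \<in> U. rho X u \<noteq> 0})
    \<and> (\<forall>U. finite U \<and> X_maximal_suffix_code X U \<and> U \<subseteq> lang_ge X m \<longrightarrow>
           (\<Sum>u\<in>U. rho X u) = (\<Sum>w\<in>lang_n X m. rho X w))"
  using finite_rho_nonzero_suffix_code[OF assms] sum_rho_maximal_suffix_code[OF assms] by blast

end
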